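(* Let $G=\langle L,X_u,X_c,(f_l)_{l\in L},\mathit{err}\rangle$ be a symbolic game. Let $e_1,\dots,e_n$ be Boolean functions on $\mathbb{B}^{L,X_u,X_c}$ with $\mathit{err}\equiv\bigvee_{i=1}^n e_i$. Consider the following procedure (Algorithm comp_1): 1. For each $1\le i\le n$, let $w_i=W\big(\langle\mathrm{cone}(e_i),X_u,X_c,(f_l)_{l\in\mathrm{cone}(e_i)}\rangle[\mathit{err}\leftarrow e_i]\big)\uparrow_{L,X_u,X_c}$. 2. Let $\Lambda=\bigwedge_{i=1}^n w_i$. 3. For each $l\in\mathrm{cone}(\Lambda)$, let $f'_l$ be a generalized cofactor of $f_l$ with respect to $\Lambda$. 4. Return $W\big(\langle\mathrm{cone}(\Lambda),X_u,X_c,(f'_l)_{l\in\mathrm{cone}(\Lambda)}\rangle[\mathit{err}\leftarrow\neg\Lambda]\big)\uparrow_{L,X_u,X_c}$. Then the returned set equals $W(G)$, the set of winning valuations of $G$.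
   Context: Let $\mathbb{B}=\{0,1\}$. For a finite set $A$ of Boolean variables, valuations are elements of $\mathbb{B}^A$. Sets of valuations are identified with characteristic functions $\mathbb{B}^A\to\mathbb{B}$, with $\wedge,\vee,\neg$ as intersection, union and complement. $\mathbb{B}^{A,B}=\mathbb{B}^A\times\mathbb{B}^B$. For $A\subseteq B$, $v\downarrow_A$ is the restriction of $v\in\mathbb{B}^B$ to $A$, and $f\uparrow_B(v)=f(v\downarrow_A)$ is the lifting of $f:\mathbb{B}^A\to\mathbb{B}$. Functions not depending on variables outside $A$ are identified with functions on $\mathbb{B}^A$. A symbolic game $G=\langle L,X_u,X_c,(f_l)_{l\in L},\mathit{err}\rangle$ consists of the following data: - finite pairwise disjoint variable sets $L$ (latches), $X_u$ (uncontrollable inputs) and $X_c$ (controllable inputs); - transition functions $f_l:\mathbb{B}^{L,X_u,X_c}\to\mathbb{B}$; - an error function $\mathit{err}:\mathbb{B}^{L,X_u,X_c}\to\mathbb{B}$. $\langle L',X_u,X_c,(g_l)_{l\in L'}\rangle[\mathit{err}\leftarrow e]$ is the game with latches $L'$, transitions $g_l$ and error function $e$, regarded as functions on $\mathbb{B}^{L',X_u,X_c}$. With $\delta(v)(l)=f_l(v)$, an execution from $v$ is a sequence $(v_i)_{i\in\mathbb{N}}$ with $v_0=v$ and $v_{i+1}\downarrow_L=\delta(v_i)$. It is safe if the error function is $0$ on all $v_i$. A strategy $\lambda:\mathbb{B}^{L,X_u}\to\mathbb{B}^{X_c}$ is compatible with an execution if $v_i\downarrow_{X_c}=\lambda(v_i\downarrow_L,v_i\downarrow_{X_u})$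 for all $i\ge0$. A valuation $v$ is winning if some strategy makes all compatible executions from $v$ safe. $W(\cdot)$ denotes the set of winning valuations of a game. Cone of influence: for a Boolean function $\Phi$, let $C$ be the minimal set of variables such that - $C$ contains every $x$ with $(\exists x:\Phi)\not\Leftrightarrow\Phi$, and - for each latch $y\in C$, $C$ contains every variable on which $f_y$ depends. Then $\mathrm{cone}(\Phi)=C\cap L$. A generalized cofactor of $f$ with respect to $g$ is any function $\hat f$ with $\hat f\wedge g=f\wedge g$. *)

theory Defs
  imports Main
begin

text \<open>Variables have type 'v; a valuation is a total map 'v \<Rightarrow> bool, of which only the
values on the relevant variable set matter.  A Boolean function on B^A is a function on
total valuations that depends only on the variables in A.\<close>

type_synonym 'v val = "'v \<Rightarrow> bool"
type_synonym 'v bfun = "'v val \<Rightarrow> bool"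

definition agree_on :: "'v set \<Rightarrow> 'v val \<Rightarrow> 'v val \<Rightarrow> bool" where
  "agree_on A v w \<longleftrightarrow> (\<forall>x\<in>A. v x = w x)"

definition supported_on :: "'v set \<Rightarrow> 'v bfun \<Rightarrow> bool" where
  "supported_on A g \<longleftrightarrow> (\<forall>v w. agree_on A v w \<longrightarrow> g v = g w)"

definition depends_on :: "'v bfun \<Rightarrow> 'v \<Rightarrow> bool" where
  "depends_on \<Phi> x \<longleftrightarrow> (\<exists>v b. \<Phi> (v(x := b)) \<noteq> \<Phi> v)"

inductive_set cone_vars :: "'v set \<Rightarrow> ('v \<Rightarrow> 'v bfun) \<Rightarrow> 'v bfun \<Rightarrow> 'v set"
  for L :: "'v set" and f :: "'v \<Rightarrow> 'v bfun" and \<Phi> :: "'v bfun" where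
  base: "depends_on \<Phi> x \<Longrightarrow> x \<in> cone_vars L f \<Phi>"
| step: "y \<in> cone_vars L f \<Phi> \<Longrightarrow> y \<in> L \<Longrightarrow> depends_on (f y) x \<Longrightarrow> x \<in> cone_vars L f \<Phi>"

definition cone :: "'v set \<Rightarrow> ('v \<Rightarrow> 'v bfun) \<Rightarrow> 'v bfun \<Rightarrow> 'v set" where
  "cone L f \<Phi> = cone_vars L f \<Phi> \<inter> L"

text \<open>A strategy maps valuations of L,Xu to valuations of Xc: it is a map on total
valuations whose Xc-part depends only on the L,Xu-part.\<close>
definition is_strategy :: "'v set \<Rightarrow> 'v set \<Rightarrow> 'v set \<Rightarrow> ('v val \<Rightarrow> 'v val) \<Rightarrow> bool" where
  "is_strategy L Xu Xc str \<longleftrightarrow>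
     (\<forall>v w. agree_on (L \<union> Xu) v w \<longrightarrow> agree_on Xc (str v) (str w))"

definition is_execution ::
  "'v set \<Rightarrow> 'v set \<Rightarrow> 'v set \<Rightarrow> ('v \<Rightarrow> 'v bfun) \<Rightarrow> 'v val \<Rightarrow> (nat \<Rightarrow> 'v val) \<Rightarrow> bool" where
  "is_execution L Xu Xc f v s \<longleftrightarrow>
     agree_on (L \<union> Xu \<union> Xc) (s 0) v \<and> (\<forall>i. \<forall>l\<in>L. s (Suc i) l = f l (s i))"

definition compatible :: "'v set \<Rightarrow> ('v val \<Rightarrow> 'v val) \<Rightarrow> (nat \<Rightarrow> 'v val) \<Rightarrow> bool" where
  "compatible Xc str s \<longleftrightarrow> (\<forall>i. agree_on Xc (s i) (str (s i)))"

definition safe_exec :: "'v bfun \<Rightarrow> (nat \<Rightarrow> 'v val) \<Rightarrow> bool" where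
  "safe_exec err s \<longleftrightarrow> (\<forall>i. \<not> err (s i))"

text \<open>Winning valuations of the game <L,Xu,Xc,(f l)_{l in L}>[err <- e], already lifted to
total valuations (membership depends only on the L,Xu,Xc-part).  The strategy is required
to be consistent with v at step 0 (otherwise there are no compatible executions and the
condition would be vacuous).\<close>
definition winning ::
  "'v set \<Rightarrow> 'v set \<Rightarrow> 'v set \<Rightarrow> ('v \<Rightarrow> 'v bfun) \<Rightarrow> 'v bfun \<Rightarrow> 'v val \<Rightarrow> bool" where
  "winning L Xu Xc f err v \<longleftrightarrow>
     (\<exists>str. is_strategy L Xu Xc str \<and> agree_on Xc v (str v) \<and>
        (\<forall>s. is_execution L Xu Xc f v s \<and> compatible Xc str s \<longrightarrow> safe_exec err s))"

definition symbolic_game ::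
  "'v set \<Rightarrow> 'v set \<Rightarrow> 'v set \<Rightarrow> ('v \<Rightarrow> 'v bfun) \<Rightarrow> 'v bfun \<Rightarrow> bool" where
  "symbolic_game L Xu Xc f err \<longleftrightarrow>
     finite L \<and> finite Xu \<and> finite Xc \<and>
     L \<inter> Xu = {} \<and> L \<inter> Xc = {} \<and> Xu \<inter> Xc = {} \<and>
     (\<forall>l\<in>L. supported_on (L \<union> Xu \<union> Xc) (f l)) \<and>
     supported_on (L \<union> Xu \<union> Xc) err"

end

theory Submission
  imports Defs
begin

text \<open>A valuation is winning iff it lies in a controlled invariant set: a set of valuations
avoiding the error from each of which the controller can answer every input so as to stay in the
set.  As err is the disjunction of the e_i, a valuation winning for G is winning for every e_i,
and restricting a game to the cone of its error leaves its winning region unchanged; conversely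
no error valuation lies in all the w_i.  Hence err may be replaced by \<not>\<Lambda> and the game
restricted to the cone of \<Lambda>.  Finally, a controlled invariant set for the error \<not>\<Lambda> never
leaves \<Lambda>, where each f_l agrees with its cofactor f'_l.\<close>

lemma agree_on_sym: "agree_on A v w \<Longrightarrow> agree_on A w v"
  by (auto simp: agree_on_def)

lemma agree_on_subset: "agree_on B v w \<Longrightarrow> A \<subseteq> B \<Longrightarrow> agree_on A v w"
  by (auto simp: agree_on_def)

lemma supported_on_mono: "supported_on A g \<Longrightarrow> A \<subseteq> B \<Longrightarrow> supported_on B g"
  unfolding supported_on_def by (meson agree_on_subset)

subsection \<open>Support and the cone of influence\<close>

lemma supported_on_depends_on:
  assumes "finite A" and "supported_on A g"
  shows "supported_on {x\<in>A. depends_on g x} g"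
proof -
  have "\<forall>v w. agree_on (A - B) v w \<longrightarrow> g v = g w"
    if "finite B" "B \<subseteq> {x\<in>A. \<not> depends_on g x}" for B
    using that
  proof (induction B rule: finite_induct)
    case empty
    then show ?case using assms(2) by (simp add: supported_on_def)
  next
    case (insert x B)
    show ?case
    proof (intro allI impI)
      fix v w assume "agree_on (A - insert x B) v w"
      then have "agree_on (A - B) (v(x := w x)) w" by (auto simp: agree_on_def)
      then have "g (v(x := w x)) = g w" using insert by blast
      moreover have "g (v(x := w x)) = g v" using insert(4) unfolding depends_on_def by blast
      ultimately show "g v = g w" by simp
    qed
  qed
  moreover have "finite {x\<in>A. \<not> depends_on g x}" using assms(1) by simp
  ultimately have "\<forall>v w. agree_on (A - {x\<in>A. \<not> depends_on g x}) v w \<longrightarrow> g v = g w" by blast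
  moreover have "A - {x\<in>A. \<not> depends_on g x} = {x\<in>A. depends_on g x}" by blast
  ultimately show ?thesis unfolding supported_on_def by simp
qed

lemma cone_subset: "cone L f \<Phi> \<subseteq> L"
  by (simp add: cone_def)

lemma supported_on_cone:
  assumes "finite (L \<union> Xu \<union> Xc)" and "supported_on (L \<union> Xu \<union> Xc) \<Phi>"
  shows "supported_on (cone L f \<Phi> \<union> Xu \<union> Xc) \<Phi>"
proof (rule supported_on_mono[OF supported_on_depends_on[OF assms]])
  show "{x \<in> L \<union> Xu \<union> Xc. depends_on \<Phi> x} \<subseteq> cone L f \<Phi> \<union> Xu \<union> Xc"
    by (auto simp: cone_def intro: cone_vars.base)
qed

lemma supported_on_cone_transition:
  assumes "finite (L \<union> Xu \<union> Xc)" and "\<forall>l\<in>L. supported_on (L \<union> Xu \<union> Xc) (f l)"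
    and l: "l \<in> cone L f \<Phi>"
  shows "supported_on (cone L f \<Phi> \<union> Xu \<union> Xc) (f l)"
proof -
  from l have "l \<in> cone_vars L f \<Phi>" "l \<in> L" by (auto simp: cone_def)
  show ?thesis
  proof (rule supported_on_mono[OF supported_on_depends_on[OF assms(1)]])
    show "supported_on (L \<union> Xu \<union> Xc) (f l)" using assms(2) \<open>l \<in> L\<close> by blast
    show "{x \<in> L \<union> Xu \<union> Xc. depends_on (f l) x} \<subseteq> cone L f \<Phi> \<union> Xu \<union> Xc"
      using \<open>l \<in> cone_vars L f \<Phi>\<close> \<open>l \<in> L\<close> by (auto simp: cone_def intro: cone_vars.step)
  qed
qed

lemma cone_not: "cone L f (\<lambda>v. \<not> \<Phi> v) = cone L f \<Phi>"
proof -
  have same_cone: "x \<in> cone_vars L f \<Psi>"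
    if "x \<in> cone_vars L f \<Phi>" "depends_on \<Phi> = depends_on \<Psi>" for x and \<Phi> \<Psi> :: "'a bfun"
    using that by (induction rule: cone_vars.induct) (auto intro: cone_vars.intros)
  have dep: "depends_on (\<lambda>v. \<not> \<Phi> v) = depends_on \<Phi>" by (auto simp: depends_on_def fun_eq_iff)
  have "cone_vars L f (\<lambda>v. \<not> \<Phi> v) = cone_vars L f \<Phi>"
    using same_cone[OF _ dep] same_cone[OF _ dep[symmetric]] by blast
  then show ?thesis by (simp add: cone_def)
qed

subsection \<open>Winning regions as controlled invariant sets\<close>

definition controlled_invariant ::
  "'v set \<Rightarrow> 'v set \<Rightarrow> 'v set \<Rightarrow> ('v \<Rightarrow> 'v bfun) \<Rightarrow> 'v bfun \<Rightarrow> 'v bfun \<Rightarrow> bool" where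
  "controlled_invariant L Xu Xc f err S \<longleftrightarrow>
     (\<forall>u u'. S u \<longrightarrow> agree_on (L \<union> Xu \<union> Xc) u u' \<longrightarrow> S u') \<and>
     (\<forall>u. S u \<longrightarrow> \<not> err u) \<and>
     (\<forall>u w. S u \<longrightarrow> (\<forall>l\<in>L. w l = f l u) \<longrightarrow> (\<exists>u'. agree_on (L \<union> Xu) u' w \<and> S u'))"

lemma winning_agree_on:
  assumes "winning L Xu Xc f err v" and "agree_on (L \<union> Xu \<union> Xc) v v'"
  shows "winning L Xu Xc f err v'"
proof -
  obtain str where str: "is_strategy L Xu Xc str" "agree_on Xc v (str v)"
    and safe: "\<forall>s. is_execution L Xu Xc f v s \<and> compatible Xc str s \<longrightarrow> safe_exec err s"
    using assms(1) unfolding winning_def by blast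
  have "agree_on Xc (str v) (str v')"
    using str(1) assms(2) unfolding is_strategy_def by (meson agree_on_subset sup.cobounded1)
  then have "agree_on Xc v' (str v')" using str(2) assms(2) by (auto simp: agree_on_def)
  moreover have "\<forall>s. is_execution L Xu Xc f v' s \<and> compatible Xc str s \<longrightarrow> safe_exec err s"
    using safe assms(2) unfolding is_execution_def agree_on_def by metis
  ultimately show ?thesis using str(1) unfolding winning_def by blast
qed

lemma supported_on_winning: "supported_on (L \<union> Xu \<union> Xc) (winning L Xu Xc f err)"
  unfolding supported_on_def by (meson winning_agree_on agree_on_sym)

lemma winning_antimono_err:
  assumes "\<And>u. err' u \<Longrightarrow> err u" and "winning L Xu Xc f err v"
  shows "winning L Xu Xc f err' v"
  using assms unfolding winning_def safe_exec_def by blast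

lemma compatible_execution_exists:
  assumes "L \<inter> Xc = {}" "Xu \<inter> Xc = {}"
    and str: "is_strategy L Xu Xc str" "agree_on Xc v (str v)"
  shows "\<exists>s. s 0 = v \<and> is_execution L Xu Xc f v s \<and> compatible Xc str s"
proof -
  define latch_step where "latch_step = (\<lambda>x y. if y \<in> L then f y x else x y)"
  define next_val where "next_val = (\<lambda>x y. if y \<in> Xc then str (latch_step x) y else latch_step x y)"
  define s where "s = rec_nat v (\<lambda>_. next_val)"
  have s0: "s 0 = v" and sSuc: "\<And>i. s (Suc i) = next_val (s i)" by (simp_all add: s_def)
  have "is_execution L Xu Xc f v s"
    unfolding is_execution_def agree_on_def using assms(1)
    by (auto simp: s0 sSuc next_val_def latch_step_def)
  moreover have "agree_on Xc (next_val x) (str (next_val x))" for x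
  proof -
    have "agree_on (L \<union> Xu) (next_val x) (latch_step x)"
      using assms(1,2) by (auto simp: agree_on_def next_val_def)
    then have "agree_on Xc (str (next_val x)) (str (latch_step x))"
      using str(1) unfolding is_strategy_def by blast
    then show ?thesis by (auto simp: agree_on_def next_val_def)
  qed
  then have "compatible Xc str s"
    unfolding compatible_def by (metis str(2) nat.exhaust s0 sSuc)
  ultimately show ?thesis using s0 by blast
qed

lemma winning_not_err:
  assumes "L \<inter> Xc = {}" "Xu \<inter> Xc = {}" and "winning L Xu Xc f err v"
  shows "\<not> err v"
proof -
  obtain str where str: "is_strategy L Xu Xc str" "agree_on Xc v (str v)"
    and safe: "\<forall>s. is_execution L Xu Xc f v s \<and> compatible Xc str s \<longrightarrow> safe_exec err s"
    using assms(3) unfolding winning_def by blast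
  obtain s where "s 0 = v" "is_execution L Xu Xc f v s" "compatible Xc str s"
    using compatible_execution_exists[OF assms(1,2) str] by blast
  with safe show ?thesis unfolding safe_exec_def by metis
qed

lemma winning_successor:
  assumes "L \<inter> Xc = {}" "Xu \<inter> Xc = {}"
    and "winning L Xu Xc f err u" and w: "\<forall>l\<in>L. w l = f l u"
  shows "\<exists>u'. agree_on (L \<union> Xu) u' w \<and> winning L Xu Xc f err u'"
proof -
  obtain str where str: "is_strategy L Xu Xc str" "agree_on Xc u (str u)"
    and safe: "\<forall>s. is_execution L Xu Xc f u s \<and> compatible Xc str s \<longrightarrow> safe_exec err s"
    using assms(3) unfolding winning_def by blast
  define u' where "u' = (\<lambda>y. if y \<in> Xc then str w y else w y)"
  have u'_w: "agree_on (L \<union> Xu) u' w" using assms(1,2) by (auto simp: agree_on_def u'_def)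
  then have "agree_on Xc (str u') (str w)" using str(1) unfolding is_strategy_def by blast
  then have u'_str: "agree_on Xc u' (str u')" by (auto simp: agree_on_def u'_def)
  have "safe_exec err t" if t: "is_execution L Xu Xc f u' t" "compatible Xc str t" for t
  proof -
    \<comment> \<open>Prefixing u to an execution from u' gives an execution from u.\<close>
    define t' where "t' = case_nat u t"
    have "is_execution L Xu Xc f u t'"
      unfolding is_execution_def
    proof (intro conjI allI ballI)
      show "agree_on (L \<union> Xu \<union> Xc) (t' 0) u" by (simp add: t'_def agree_on_def)
    next
      fix i l assume l: "l \<in> L"
      show "t' (Suc i) l = f l (t' i)"
      proof (cases i)
        case 0
        have "t 0 l = u' l" using t(1) l unfolding is_execution_def agree_on_def by blast
        also have "\<dots> = w l" using u'_w l by (auto simp: agree_on_def)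
        finally show ?thesis using 0 w l by (simp add: t'_def)
      next
        case (Suc j)
        then show ?thesis using t(1) l unfolding is_execution_def by (simp add: t'_def)
      qed
    qed
    moreover have "compatible Xc str t'"
      using t(2) str(2) unfolding compatible_def t'_def by (simp split: nat.split)
    ultimately have "safe_exec err t'" using safe by blast
    then show ?thesis unfolding safe_exec_def t'_def by (metis nat.case(2))
  qed
  then have "winning L Xu Xc f err u'" unfolding winning_def using str(1) u'_str by blast
  with u'_w show ?thesis by blast
qed

lemma controlled_invariant_winning:
  assumes "L \<inter> Xc = {}" "Xu \<inter> Xc = {}"
  shows "controlled_invariant L Xu Xc f err (winning L Xu Xc f err)"
  unfolding controlled_invariant_def
  using winning_agree_on winning_not_err[OF assms] winning_successor[OF assms] by blast

lemma controlled_invariant_strategy: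
  assumes "controlled_invariant L Xu Xc f err S" and "S v"
  shows "\<exists>str. is_strategy L Xu Xc str \<and> str v = v \<and>
    (\<forall>x u. S u \<longrightarrow> agree_on (L \<union> Xu) u x \<longrightarrow> S (str x) \<and> agree_on (L \<union> Xu) (str x) x)"
proof -
  \<comment> \<open>The chosen answer depends on x only through its L,Xu-part, and is v itself on v.\<close>
  define P where "P = (\<lambda>x u. S u \<and> agree_on (L \<union> Xu) u x \<and> (agree_on (L \<union> Xu) x v \<longrightarrow> u = v))"
  define str where "str = (\<lambda>x. SOME u. P x u)"
  have "str x = str y" if "agree_on (L \<union> Xu) x y" for x y
  proof -
    have "P x = P y" using that by (auto simp: P_def agree_on_def fun_eq_iff)
    then show ?thesis by (simp add: str_def)
  qed
  then have "is_strategy L Xu Xc str"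
    unfolding is_strategy_def agree_on_def by metis
  moreover have "P v v" using assms(2) by (simp add: P_def agree_on_def)
  then have "str v = v" unfolding str_def by (metis (mono_tags, lifting) P_def someI_ex)
  moreover have "S (str x) \<and> agree_on (L \<union> Xu) (str x) x"
    if "S u" "agree_on (L \<union> Xu) u x" for x u
  proof -
    have "\<exists>u. P x u" using that assms(2) unfolding P_def by (metis agree_on_sym)
    then show ?thesis unfolding str_def by (metis (mono_tags, lifting) P_def someI_ex)
  qed
  ultimately show ?thesis by (intro exI[of _ str]) blast
qed

lemma controlled_invariant_le_winning:
  assumes inv: "controlled_invariant L Xu Xc f err S"
  shows "S \<le> winning L Xu Xc f err"
proof (rule predicate1I)
  fix v assume "S v"
  have closed: "\<And>u u'. S u \<Longrightarrow> agree_on (L \<union> Xu \<union> Xc) u u' \<Longrightarrow> S u'"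
    and safe: "\<And>u. S u \<Longrightarrow> \<not> err u"
    and succ: "\<And>u w. S u \<Longrightarrow> \<forall>l\<in>L. w l = f l u \<Longrightarrow> \<exists>u'. agree_on (L \<union> Xu) u' w \<and> S u'"
    using inv unfolding controlled_invariant_def by blast+
  obtain str where str: "is_strategy L Xu Xc str" "str v = v"
    and stays: "\<forall>x u. S u \<longrightarrow> agree_on (L \<union> Xu) u x \<longrightarrow> S (str x) \<and> agree_on (L \<union> Xu) (str x) x"
    using controlled_invariant_strategy[of L Xu Xc f err S v, OF inv \<open>S v\<close>] by blast
  have "safe_exec err s" if ex: "is_execution L Xu Xc f v s" and comp: "compatible Xc str s" for s
  proof -
    have "S (s i)" for i
    proof (induction i)
      case 0
      then show ?case using ex \<open>S v\<close> closed agree_on_sym unfolding is_execution_def by blast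
    next
      case (Suc i)
      have "\<forall>l\<in>L. s (Suc i) l = f l (s i)" using ex unfolding is_execution_def by blast
      then obtain u where "S u" "agree_on (L \<union> Xu) u (s (Suc i))" using succ Suc by blast
      then have "S (str (s (Suc i)))" "agree_on (L \<union> Xu) (str (s (Suc i))) (s (Suc i))"
        using stays by blast+
      moreover have "agree_on Xc (s (Suc i)) (str (s (Suc i)))"
        using comp unfolding compatible_def by blast
      ultimately have "agree_on (L \<union> Xu \<union> Xc) (str (s (Suc i))) (s (Suc i))"
        by (auto simp: agree_on_def)
      with \<open>S (str (s (Suc i)))\<close> show ?case using closed by blast
    qed
    then show ?thesis unfolding safe_exec_def using safe by blast
  qed
  then show "winning L Xu Xc f err v" unfolding winning_def using str by (auto simp: agree_on_def)
qed

subsection \<open>The three transformations of the game\<close>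

lemma winning_cong_err:
  assumes "L \<inter> Xc = {}" "Xu \<inter> Xc = {}"
    and "\<And>u. err u \<Longrightarrow> err' u" and "\<And>u. winning L Xu Xc f err u \<Longrightarrow> \<not> err' u"
  shows "winning L Xu Xc f err' = winning L Xu Xc f err"
proof (rule antisym)
  show "winning L Xu Xc f err' \<le> winning L Xu Xc f err"
    using assms(3) winning_antimono_err by blast
  have "controlled_invariant L Xu Xc f err' (winning L Xu Xc f err)"
    using controlled_invariant_winning[OF assms(1,2)] assms(4)
    unfolding controlled_invariant_def by blast
  then show "winning L Xu Xc f err \<le> winning L Xu Xc f err'"
    by (rule controlled_invariant_le_winning)
qed

lemma controlled_invariant_restrict:
  assumes "C \<subseteq> L" "L \<inter> Xu = {}"
    and f: "\<forall>l\<in>C. supported_on (C \<union> Xu \<union> Xc) (f l)"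
    and err: "supported_on (C \<union> Xu \<union> Xc) err"
    and inv: "controlled_invariant L Xu Xc f err S"
  shows "controlled_invariant C Xu Xc f err (\<lambda>u. \<exists>u0. S u0 \<and> agree_on (C \<union> Xu \<union> Xc) u u0)"
    (is "controlled_invariant C Xu Xc f err ?T")
  unfolding controlled_invariant_def
proof (intro conjI allI impI)
  fix u u' assume "?T u" "agree_on (C \<union> Xu \<union> Xc) u u'"
  then show "?T u'" unfolding agree_on_def by metis
next
  fix u assume "?T u"
  then obtain u0 where "S u0" "agree_on (C \<union> Xu \<union> Xc) u u0" by blast
  then have "err u = err u0" using err unfolding supported_on_def by blast
  moreover have "\<not> err u0" using inv \<open>S u0\<close> unfolding controlled_invariant_def by blast
  ultimately show "\<not> err u" by simp
next
  fix u w assume "?T u" and w: "\<forall>l\<in>C. w l = f l u"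
  then obtain u0 where u0: "S u0" "agree_on (C \<union> Xu \<union> Xc) u u0" by blast
  \<comment> \<open>Let the latches outside C move as in the full game from u0.\<close>
  define w0 where "w0 = (\<lambda>x. if x \<in> L then f x u0 else w x)"
  have "\<forall>l\<in>L. w0 l = f l u0" by (simp add: w0_def)
  then obtain u0' where u0': "agree_on (L \<union> Xu) u0' w0" "S u0'"
    using inv u0(1) unfolding controlled_invariant_def by blast
  have "f l u = f l u0" if "l \<in> C" for l using f that u0(2) unfolding supported_on_def by blast
  then have "agree_on (C \<union> Xu) w0 w" using w assms(1,2) by (auto simp: agree_on_def w0_def)
  then have "agree_on (C \<union> Xu) u0' w" using u0'(1) assms(1) by (auto simp: agree_on_def)
  moreover have "?T u0'" using u0'(2) by (auto simp: agree_on_def)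
  ultimately show "\<exists>u'. agree_on (C \<union> Xu) u' w \<and> ?T u'" by blast
qed

lemma controlled_invariant_extend:
  assumes "C \<subseteq> L" "L \<inter> Xc = {}" "Xu \<inter> Xc = {}"
    and inv: "controlled_invariant C Xu Xc f err S"
  shows "controlled_invariant L Xu Xc f err S"
proof -
  have closed: "\<And>u u'. S u \<Longrightarrow> agree_on (C \<union> Xu \<union> Xc) u u' \<Longrightarrow> S u'"
    and succ: "\<And>u w. S u \<Longrightarrow> \<forall>l\<in>C. w l = f l u \<Longrightarrow> \<exists>u'. agree_on (C \<union> Xu) u' w \<and> S u'"
    using inv unfolding controlled_invariant_def by blast+
  have "\<exists>u'. agree_on (L \<union> Xu) u' w \<and> S u'" if u: "S u" "\<forall>l\<in>L. w l = f l u" for u w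
  proof -
    obtain u' where u': "agree_on (C \<union> Xu) u' w" "S u'" using succ u assms(1) by blast
    define u'' where "u'' = (\<lambda>x. if x \<in> L \<union> Xu then w x else u' x)"
    have "agree_on (C \<union> Xu \<union> Xc) u' u''"
      using u'(1) assms(1-3) unfolding agree_on_def u''_def by auto
    then have "S u''" using closed u'(2) by blast
    moreover have "agree_on (L \<union> Xu) u'' w" by (simp add: agree_on_def u''_def)
    ultimately show ?thesis by blast
  qed
  moreover have "\<And>u u'. S u \<Longrightarrow> agree_on (L \<union> Xu \<union> Xc) u u' \<Longrightarrow> S u'"
    using closed assms(1) by (meson agree_on_subset Un_mono subset_refl)
  ultimately show ?thesis using inv unfolding controlled_invariant_def by blast
qed

lemma winning_restrict_latches:
  assumes "C \<subseteq> L" "L \<inter> Xu = {}" "L \<inter> Xc = {}" "Xu \<inter> Xc = {}"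
    and "\<forall>l\<in>C. supported_on (C \<union> Xu \<union> Xc) (f l)"
    and "supported_on (C \<union> Xu \<union> Xc) err"
  shows "winning C Xu Xc f err = winning L Xu Xc f err"
proof (rule antisym)
  have "C \<inter> Xc = {}" using assms(1,3) by blast
  show "winning C Xu Xc f err \<le> winning L Xu Xc f err"
    using controlled_invariant_extend[OF assms(1,3,4)
        controlled_invariant_winning[OF \<open>C \<inter> Xc = {}\<close> assms(4)]]
    by (rule controlled_invariant_le_winning)
  have "winning L Xu Xc f err
      \<le> (\<lambda>u. \<exists>u0. winning L Xu Xc f err u0 \<and> agree_on (C \<union> Xu \<union> Xc) u u0)"
    by (auto simp: agree_on_def)
  also have "\<dots> \<le> winning C Xu Xc f err"
    using controlled_invariant_restrict[OF assms(1,2,5,6)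
        controlled_invariant_winning[OF assms(3,4)]]
    by (rule controlled_invariant_le_winning)
  finally show "winning L Xu Xc f err \<le> winning C Xu Xc f err" .
qed

lemma controlled_invariant_cong_transitions:
  assumes inv: "controlled_invariant L Xu Xc f err S"
    and f': "\<forall>l\<in>L. \<forall>u. \<not> err u \<longrightarrow> f' l u = f l u"
  shows "controlled_invariant L Xu Xc f' err S"
proof -
  have "\<exists>u'. agree_on (L \<union> Xu) u' w \<and> S u'" if "S u" "\<forall>l\<in>L. w l = f' l u" for u w
  proof -
    have "\<not> err u" using inv \<open>S u\<close> unfolding controlled_invariant_def by blast
    then have "\<forall>l\<in>L. w l = f l u" using that(2) f' by simp
    then show ?thesis using inv \<open>S u\<close> unfolding controlled_invariant_def by blast
  qed
  then show ?thesis using inv unfolding controlled_invariant_def by blast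
qed

lemma winning_cofactor:
  assumes "L \<inter> Xc = {}" "Xu \<inter> Xc = {}"
    and "\<forall>l\<in>L. \<forall>u. \<Lambda> u \<longrightarrow> f' l u = f l u"
  shows "winning L Xu Xc f' (\<lambda>v. \<not> \<Lambda> v) = winning L Xu Xc f (\<lambda>v. \<not> \<Lambda> v)"
proof -
  have "controlled_invariant L Xu Xc f (\<lambda>v. \<not> \<Lambda> v) (winning L Xu Xc f' (\<lambda>v. \<not> \<Lambda> v))"
    by (rule controlled_invariant_cong_transitions[OF controlled_invariant_winning[OF assms(1,2)]])
      (use assms(3) in simp)
  moreover have "controlled_invariant L Xu Xc f' (\<lambda>v. \<not> \<Lambda> v) (winning L Xu Xc f (\<lambda>v. \<not> \<Lambda> v))"
    by (rule controlled_invariant_cong_transitions[OF controlled_invariant_winning[OF assms(1,2)]])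
      (use assms(3) in simp)
  ultimately show ?thesis
    by (intro antisym controlled_invariant_le_winning)
qed

lemma winning_err_local_regions:
  assumes "L \<inter> Xc = {}" "Xu \<inter> Xc = {}" and "\<forall>v. err v = (\<exists>i\<in>I. e i v)"
  shows "winning L Xu Xc f (\<lambda>v. \<not> (\<forall>i\<in>I. winning L Xu Xc f (e i) v)) = winning L Xu Xc f err"
proof (rule winning_cong_err[OF assms(1,2)])
  fix u
  show "\<not> (\<forall>i\<in>I. winning L Xu Xc f (e i) u)" if "err u"
    using that assms(3) winning_not_err[OF assms(1,2)] by blast
  show "\<not> \<not> (\<forall>i\<in>I. winning L Xu Xc f (e i) u)" if "winning L Xu Xc f err u"
    using winning_antimono_err[OF _ that] assms(3) by blast
qed

lemma winning_cone:
  assumes "symbolic_game L Xu Xc f err" and "supported_on (L \<union> Xu \<union> Xc) \<Phi>"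
  shows "winning (cone L f \<Phi>) Xu Xc f \<Phi> = winning L Xu Xc f \<Phi>"
proof -
  have fin: "finite (L \<union> Xu \<union> Xc)" and dj: "L \<inter> Xu = {}" "L \<inter> Xc = {}" "Xu \<inter> Xc = {}"
    and f: "\<forall>l\<in>L. supported_on (L \<union> Xu \<union> Xc) (f l)"
    using assms(1) unfolding symbolic_game_def by auto
  have "\<forall>l\<in>cone L f \<Phi>. supported_on (cone L f \<Phi> \<union> Xu \<union> Xc) (f l)"
    using supported_on_cone_transition[OF fin f] by blast
  then show ?thesis
    using winning_restrict_latches[OF cone_subset dj _ supported_on_cone[OF fin assms(2)]] by blast
qed

theorem theorem1:
  fixes L Xu Xc :: "'v set"
    and f f' :: "'v \<Rightarrow> 'v bfun"
    and err :: "'v bfun"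
    and e :: "nat \<Rightarrow> 'v bfun"
    and n :: nat
    and w :: "nat \<Rightarrow> 'v bfun"
    and \<Lambda> :: "'v bfun"
  assumes game: "symbolic_game L Xu Xc f err"
    and e_fun: "\<forall>i\<in>{1..n}. supported_on (L \<union> Xu \<union> Xc) (e i)"
    and err_eq: "\<forall>v. err v = (\<exists>i\<in>{1..n}. e i v)"
    and w_def: "\<forall>i\<in>{1..n}. w i = winning (cone L f (e i)) Xu Xc f (e i)"
    and Lambda_def: "\<Lambda> = (\<lambda>v. \<forall>i\<in>{1..n}. w i v)"
    and f'_fun: "\<forall>l\<in>cone L f \<Lambda>. supported_on (cone L f \<Lambda> \<union> Xu \<union> Xc) (f' l)"
    and f'_cof: "\<forall>l\<in>cone L f \<Lambda>. \<forall>v. (f' l v \<and> \<Lambda> v) = (f l v \<and> \<Lambda> v)"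
  shows "{v. winning (cone L f \<Lambda>) Xu Xc f' (\<lambda>v. \<not> \<Lambda> v) v} = {v. winning L Xu Xc f err v}"
proof -
  have dj: "L \<inter> Xc = {}" "Xu \<inter> Xc = {}" "cone L f \<Lambda> \<inter> Xc = {}"
    using game cone_subset[of L f \<Lambda>] unfolding symbolic_game_def by auto
  have "w i = winning L Xu Xc f (e i)" if "i \<in> {1..n}" for i
    using w_def winning_cone[OF game] e_fun that by simp
  then have \<Lambda>_eq: "\<Lambda> = (\<lambda>v. \<forall>i\<in>{1..n}. winning L Xu Xc f (e i) v)"
    using Lambda_def by auto
  have "supported_on (L \<union> Xu \<union> Xc) (\<lambda>v. \<not> \<Lambda> v)"
    using supported_on_winning unfolding \<Lambda>_eq supported_on_def by blast
  then have "winning (cone L f \<Lambda>) Xu Xc f (\<lambda>v. \<not> \<Lambda> v) = winning L Xu Xc f (\<lambda>v. \<not> \<Lambda> v)"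
    using winning_cone[OF game] cone_not by metis
  also have "\<dots> = winning L Xu Xc f err"
    unfolding \<Lambda>_eq using winning_err_local_regions[OF dj(1,2) err_eq] .
  moreover have "winning (cone L f \<Lambda>) Xu Xc f' (\<lambda>v. \<not> \<Lambda> v)
      = winning (cone L f \<Lambda>) Xu Xc f (\<lambda>v. \<not> \<Lambda> v)"
    using winning_cofactor[OF dj(3,2)] f'_cof by blast
  ultimately show ?thesis by simp
qed

end
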